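(* Let $T$ be a set of $n$ transactions with a nonempty symmetric irreflexive conflict relation $\bowtie$. Let $M=\min_\pi p(\pi)$ over all total orders $\pi$ of $T$, and let $ch$ be the maximum number $m$ such that there exist distinct transactions $tx_1,\dots,tx_m$ with $tx_1\bowtie tx_2\bowtie\cdots\bowtie tx_m$. Then the set of concurrency levels $\{n/p(\pi):\pi \text{ a total order of } T\}$ has at least $\alpha=\left\lceil \frac{ch-(M-1)}{M-1}\right\rceil$ distinct elements.
   Context: A set of transactions is conflict-free if no two of its elements conflict. For a total order $\pi$ of $T$, a $\pi$-respecting phase sequence is an ordered partition $(P_1,\dots,P_m)$ of $T$ into conflict-free sets (phases) such that whenever $tx\bowtie tx'$ and $tx$ precedes $tx'$ in $\pi$, the phase containing $tx$ has a smaller index than the phase containing $tx'$. $p(\pi)$, the necessary number of phases for execution given $\pi$, is the minimum length $m$ of a $\pi$-respecting phase sequence, and $n/p(\pi)$ is the concurrency level of $\pi$. *)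

theory Defs
  imports Complex_Main
begin

definition total_order_of :: "'a set \<Rightarrow> 'a list \<Rightarrow> bool" where
  "total_order_of T \<pi> \<longleftrightarrow> distinct \<pi> \<and> set \<pi> = T"

definition precedes :: "'a list \<Rightarrow> 'a \<Rightarrow> 'a \<Rightarrow> bool" where
  "precedes \<pi> x y \<longleftrightarrow> (\<exists>i j. i < j \<and> j < length \<pi> \<and> \<pi> ! i = x \<and> \<pi> ! j = y)"

definition conflict_free :: "('a \<Rightarrow> 'a \<Rightarrow> bool) \<Rightarrow> 'a set \<Rightarrow> bool" where
  "conflict_free C P \<longleftrightarrow> (\<forall>x\<in>P. \<forall>y\<in>P. x \<noteq> y \<longrightarrow> \<not> C x y)"

definition respecting_phase_seq ::
  "('a \<Rightarrow> 'a \<Rightarrow> bool) \<Rightarrow> 'a set \<Rightarrow> 'a list \<Rightarrow> 'a set list \<Rightarrow> bool" where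
  "respecting_phase_seq C T \<pi> Ps \<longleftrightarrow>
     (\<forall>i < length Ps. Ps ! i \<noteq> {} \<and> conflict_free C (Ps ! i)) \<and>
     (\<forall>i j. i < length Ps \<and> j < length Ps \<and> i \<noteq> j \<longrightarrow> Ps ! i \<inter> Ps ! j = {}) \<and>
     \<Union> (set Ps) = T \<and>
     (\<forall>i j x y. i < length Ps \<and> j < length Ps \<and> x \<in> Ps ! i \<and> y \<in> Ps ! j \<and>
        C x y \<and> precedes \<pi> x y \<longrightarrow> i < j)"

definition num_phases :: "('a \<Rightarrow> 'a \<Rightarrow> bool) \<Rightarrow> 'a set \<Rightarrow> 'a list \<Rightarrow> nat" where
  "num_phases C T \<pi> = (LEAST m. \<exists>Ps. respecting_phase_seq C T \<pi> Ps \<and> length Ps = m)"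

definition concurrency_level :: "('a \<Rightarrow> 'a \<Rightarrow> bool) \<Rightarrow> 'a set \<Rightarrow> 'a list \<Rightarrow> real" where
  "concurrency_level C T \<pi> = real (card T) / real (num_phases C T \<pi>)"

definition conflict_chain :: "('a \<Rightarrow> 'a \<Rightarrow> bool) \<Rightarrow> 'a set \<Rightarrow> 'a list \<Rightarrow> bool" where
  "conflict_chain C T xs \<longleftrightarrow> distinct xs \<and> set xs \<subseteq> T \<and>
     (\<forall>i. i + 1 < length xs \<longrightarrow> C (xs ! i) (xs ! (i + 1)))"

definition ch :: "('a \<Rightarrow> 'a \<Rightarrow> bool) \<Rightarrow> 'a set \<Rightarrow> nat" where
  "ch C T = Max {length xs | xs. conflict_chain C T xs}"

definition min_phases :: "('a \<Rightarrow> 'a \<Rightarrow> bool) \<Rightarrow> 'a set \<Rightarrow> nat" where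
  "min_phases C T = Min {num_phases C T \<pi> | \<pi>. total_order_of T \<pi>}"

end

theory Submission
  imports Defs
begin

text \<open>Fix an order \<sigma> with p(\<sigma>) = M and a longest conflict chain tx_1, ..., tx_ch.
  Moving tx_ch, ..., tx_1 one after the other to the front of \<sigma> gives orders whose phase
  numbers start at M and end at least at ch, because the chain then appears in order and its
  consecutive conflicts force ch distinct phases.  Moving a single transaction to the front
  raises the phase number by at most one (give it a new first phase), so every value between
  M and ch is a phase number, and n/p is injective in p: there are at least ch - M + 1 \<ge> \<alpha>
  concurrency levels.\<close>

lemma precedes_Nil [simp]: "\<not> precedes [] a b"
  by (simp add: precedes_def)

lemma precedes_Cons: "precedes (y # ys) a b \<longleftrightarrow> (y = a \<and> b \<in> set ys) \<or> precedes ys a b"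
proof
  assume "precedes (y # ys) a b"
  then obtain i j where ij: "i < j" "j < length (y # ys)" "(y # ys) ! i = a" "(y # ys) ! j = b"
    unfolding precedes_def by blast
  then obtain j' where j: "j = Suc j'"
    by (cases j) auto
  show "(y = a \<and> b \<in> set ys) \<or> precedes ys a b"
  proof (cases i)
    case 0
    then show ?thesis
      using ij j by auto
  next
    case (Suc i')
    then show ?thesis
      using ij j unfolding precedes_def by auto
  qed
next
  assume "(y = a \<and> b \<in> set ys) \<or> precedes ys a b"
  then show "precedes (y # ys) a b"
  proof
    assume "y = a \<and> b \<in> set ys"
    then show ?thesis
      unfolding precedes_def in_set_conv_nth by (force intro: exI[of _ 0])
  next
    assume "precedes ys a b"
    then obtain i j where "i < j" "j < length ys" "ys ! i = a" "ys ! j = b"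
      unfolding precedes_def by blast
    then show ?thesis
      unfolding precedes_def by (intro exI[of _ "Suc i"] exI[of _ "Suc j"]) auto
  qed
qed

lemma precedes_imp_in_set: "precedes ys a b \<Longrightarrow> a \<in> set ys \<and> b \<in> set ys"
  by (induction ys) (auto simp: precedes_Cons)

lemma precedes_total:
  "a \<in> set ys \<Longrightarrow> b \<in> set ys \<Longrightarrow> a \<noteq> b \<Longrightarrow> precedes ys a b \<or> precedes ys b a"
  by (induction ys) (auto simp: precedes_Cons)

lemma precedes_filter_iff: "precedes (filter P ys) a b \<longleftrightarrow> precedes ys a b \<and> P a \<and> P b"
  by (induction ys) (auto simp: precedes_Cons dest: precedes_imp_in_set)

lemma precedes_move_to_front:
  "precedes (x # removeAll x ys) a b \<longleftrightarrow>
     (a = x \<and> b \<in> set ys \<and> b \<noteq> x) \<or> (precedes ys a b \<and> a \<noteq> x \<and> b \<noteq> x)"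
  by (auto simp: precedes_Cons removeAll_filter_not_eq precedes_filter_iff)

lemma precedes_append_consecutive:
  "i + 1 < length xs \<Longrightarrow> precedes (xs @ ys) (xs ! i) (xs ! (i + 1))"
  unfolding precedes_def by (intro exI[of _ i] exI[of _ "i + 1"]) (simp add: nth_append)

text \<open>A rank r x is a phase index for x; unlike phase sequences, ranks may leave phases empty.\<close>

definition respecting_rank ::
  "('a \<Rightarrow> 'a \<Rightarrow> bool) \<Rightarrow> 'a set \<Rightarrow> 'a list \<Rightarrow> nat \<Rightarrow> ('a \<Rightarrow> nat) \<Rightarrow> bool" where
  "respecting_rank C S \<pi> m r \<longleftrightarrow>
     (\<forall>x\<in>S. r x < m) \<and> (\<forall>x\<in>S. \<forall>y\<in>S. C x y \<and> precedes \<pi> x y \<longrightarrow> r x < r y)"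

lemma respecting_phase_seq_singletons:
  assumes "total_order_of T \<pi>"
  shows "respecting_phase_seq C T \<pi> (map (\<lambda>x. {x}) \<pi>)"
proof -
  have "distinct \<pi>" "set \<pi> = T"
    using assms unfolding total_order_of_def by auto
  then show ?thesis
    unfolding respecting_phase_seq_def conflict_free_def precedes_def
    by (auto simp: nth_eq_iff_index_eq)
qed

lemma respecting_phase_seq_snoc:
  assumes Ps: "respecting_phase_seq C S \<pi> Ps"
    and P: "P \<noteq> {}" "conflict_free C P" "S \<inter> P = {}"
    and no_back: "\<forall>x\<in>P. \<forall>y\<in>S \<union> P. \<not> (C x y \<and> precedes \<pi> x y)"
  shows "respecting_phase_seq C (S \<union> P) \<pi> (Ps @ [P])"
proof -
  let ?Q = "Ps @ [P]"
  have Q_nth: "i < length ?Q \<Longrightarrow> ?Q ! i = (if i < length Ps then Ps ! i else P)" for i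
    by (auto simp: nth_append)
  have in_S: "Ps ! i \<subseteq> S" if "i < length Ps" for i
    using Ps that unfolding respecting_phase_seq_def by (auto simp: nth_mem)
  have phases: "?Q ! i \<noteq> {} \<and> conflict_free C (?Q ! i)" if "i < length ?Q" for i
    using Ps P that unfolding Q_nth[OF that] respecting_phase_seq_def by auto
  have disjoint: "?Q ! i \<inter> ?Q ! j = {}" if "i < length ?Q" "j < length ?Q" "i \<noteq> j" for i j
    using that Ps in_S[of i] in_S[of j] P(3) unfolding Q_nth[OF that(1)] Q_nth[OF that(2)]
    unfolding respecting_phase_seq_def by (auto simp: less_Suc_eq)
  have ordered: "i < j"
    if "i < length ?Q" "j < length ?Q" "x \<in> ?Q ! i" "y \<in> ?Q ! j" "C x y" "precedes \<pi> x y"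
    for i j x y
    using that Ps in_S[of i] in_S[of j] no_back unfolding Q_nth[OF that(1)] Q_nth[OF that(2)]
    unfolding respecting_phase_seq_def by (simp add: less_Suc_eq split: if_splits; blast)
  have "\<Union> (set ?Q) = S \<union> P"
    using Ps unfolding respecting_phase_seq_def by auto
  with phases disjoint ordered show ?thesis
    unfolding respecting_phase_seq_def by blast
qed

lemma respecting_phase_seq_of_rank:
  assumes "respecting_rank C S \<pi> m r" "S \<subseteq> set \<pi>"
    and "\<forall>x\<in>S. \<forall>y\<in>S. C x y \<longrightarrow> C y x"
  shows "\<exists>Ps. respecting_phase_seq C S \<pi> Ps \<and> length Ps \<le> m"
  using assms
proof (induction m arbitrary: S)
  case 0
  then have "S = {}"
    unfolding respecting_rank_def by auto
  then show ?case
    by (intro exI[of _ "[]"]) (simp add: respecting_phase_seq_def)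
next
  case (Suc m)
  define lower where "lower = {x\<in>S. r x < m}"
  define top where "top = {x\<in>S. r x = m}"
  have rank: "\<forall>x\<in>S. r x < Suc m" "\<forall>x\<in>S. \<forall>y\<in>S. C x y \<and> precedes \<pi> x y \<longrightarrow> r x < r y"
    using Suc.prems(1) unfolding respecting_rank_def by auto
  have "respecting_rank C lower \<pi> m r"
    using rank unfolding respecting_rank_def lower_def by auto
  moreover have "lower \<subseteq> S"
    unfolding lower_def by blast
  ultimately obtain Ps where Ps: "respecting_phase_seq C lower \<pi> Ps" "length Ps \<le> m"
    using Suc.IH[of lower] Suc.prems(2,3) by (meson subset_trans subsetD)
  have S_split: "S = lower \<union> top"
    using rank(1) unfolding lower_def top_def by auto
  show ?case
  proof (cases "top = {}")
    case True
    then show ?thesis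
      using Ps S_split by auto
  next
    case False
    have no_back: "\<forall>x\<in>top. \<forall>y\<in>lower \<union> top. \<not> (C x y \<and> precedes \<pi> x y)"
    proof (intro ballI notI)
      fix x y
      assume "x \<in> top" "y \<in> lower \<union> top" "C x y \<and> precedes \<pi> x y"
      then have "r x < r y" "r x = m" "r y \<le> m"
        using rank(2) unfolding lower_def top_def by auto
      then show False
        by simp
    qed
    have "conflict_free C top"
      unfolding conflict_free_def
    proof (intro ballI impI notI)
      fix x y
      assume xy: "x \<in> top" "y \<in> top" "x \<noteq> y" "C x y"
      then have "precedes \<pi> x y \<or> precedes \<pi> y x"
        using precedes_total[of x \<pi> y] Suc.prems(2) unfolding top_def by auto
      moreover have "C y x"
        using Suc.prems(3) xy unfolding top_def by blast
      ultimately show False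
        using no_back xy by blast
    qed
    moreover have "lower \<inter> top = {}"
      unfolding lower_def top_def by auto
    ultimately have "respecting_phase_seq C S \<pi> (Ps @ [top])"
      using respecting_phase_seq_snoc[OF Ps(1) False _ _ no_back] S_split by simp
    then show ?thesis
      using Ps(2) by (intro exI[of _ "Ps @ [top]"]) simp
  qed
qed

lemma rank_of_respecting_phase_seq:
  assumes "respecting_phase_seq C S \<pi> Ps"
  shows "\<exists>r. respecting_rank C S \<pi> (length Ps) r"
proof -
  have "\<forall>x\<in>S. \<exists>j. j < length Ps \<and> x \<in> Ps ! j"
    using assms unfolding respecting_phase_seq_def by (auto simp: in_set_conv_nth)
  then have "\<exists>r. \<forall>x\<in>S. r x < length Ps \<and> x \<in> Ps ! r x"
    by (rule bchoice)
  then obtain r where r: "\<forall>x\<in>S. r x < length Ps \<and> x \<in> Ps ! r x"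
    by blast
  have ordered: "i < j" if "i < length Ps" "j < length Ps" "x \<in> Ps ! i" "y \<in> Ps ! j"
    "C x y" "precedes \<pi> x y" for i j x y
    using assms that unfolding respecting_phase_seq_def by blast
  have "r x < r y" if "x \<in> S" "y \<in> S" "C x y" "precedes \<pi> x y" for x y
    using ordered[of "r x" "r y" x y] r that by blast
  with r show ?thesis
    unfolding respecting_rank_def by blast
qed

lemma num_phases_le:
  "respecting_phase_seq C T \<pi> Ps \<Longrightarrow> num_phases C T \<pi> \<le> length Ps"
  unfolding num_phases_def by (rule Least_le) blast

lemma num_phases_attained:
  assumes "total_order_of T \<pi>"
  shows "\<exists>Ps. respecting_phase_seq C T \<pi> Ps \<and> length Ps = num_phases C T \<pi>"
proof -
  have "\<exists>m Ps. respecting_phase_seq C T \<pi> Ps \<and> length Ps = m"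
    using respecting_phase_seq_singletons[OF assms] by blast
  then show ?thesis
    unfolding num_phases_def by (rule LeastI2_ex) blast
qed

lemma num_phases_le_rank:
  assumes "respecting_rank C T \<pi> m r" "T \<subseteq> set \<pi>" "\<forall>x\<in>T. \<forall>y\<in>T. C x y \<longrightarrow> C y x"
  shows "num_phases C T \<pi> \<le> m"
  using respecting_phase_seq_of_rank[OF assms] num_phases_le le_trans by blast

lemma rank_num_phases:
  "total_order_of T \<pi> \<Longrightarrow> \<exists>r. respecting_rank C T \<pi> (num_phases C T \<pi>) r"
  using num_phases_attained rank_of_respecting_phase_seq by metis

lemma length_le_rank_bound:
  assumes r: "respecting_rank C S \<pi> m r" and "set xs \<subseteq> S"
    and chain: "\<forall>i. i + 1 < length xs \<longrightarrow>
      C (xs ! i) (xs ! (i + 1)) \<and> precedes \<pi> (xs ! i) (xs ! (i + 1))"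
  shows "length xs \<le> m"
proof (cases "xs = []")
  case False
  have in_S: "i < length xs \<Longrightarrow> xs ! i \<in> S" for i
    using \<open>set xs \<subseteq> S\<close> by (auto simp: nth_mem)
  have rank_ge: "i < length xs \<Longrightarrow> i \<le> r (xs ! i)" for i
  proof (induction i)
    case (Suc i)
    then have "r (xs ! i) < r (xs ! (i + 1))"
      using r chain in_S unfolding respecting_rank_def by simp
    with Suc show ?case
      by simp
  qed simp
  have "r (xs ! (length xs - 1)) < m"
    using r in_S[of "length xs - 1"] False unfolding respecting_rank_def by simp
  with rank_ge[of "length xs - 1"] False show ?thesis
    by simp
qed simp

lemma num_phases_move_to_front:
  assumes \<pi>: "total_order_of T \<pi>" and "x \<in> T"
    and sym: "\<forall>x\<in>T. \<forall>y\<in>T. C x y \<longrightarrow> C y x"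
  shows "num_phases C T (x # removeAll x \<pi>) \<le> num_phases C T \<pi> + 1"
proof -
  obtain r where r: "respecting_rank C T \<pi> (num_phases C T \<pi>) r"
    using rank_num_phases[OF \<pi>] by blast
  let ?r = "\<lambda>y. if y = x then 0 else Suc (r y)"
  have "respecting_rank C T (x # removeAll x \<pi>) (num_phases C T \<pi> + 1) ?r"
    using r unfolding respecting_rank_def precedes_move_to_front by auto
  moreover have "T \<subseteq> set (x # removeAll x \<pi>)"
    using \<pi> unfolding total_order_of_def by auto
  ultimately show ?thesis
    using num_phases_le_rank sym by blast
qed

definition move_all_to_front :: "'a list \<Rightarrow> 'a list \<Rightarrow> 'a list" where
  "move_all_to_front xs \<pi> = xs @ filter (\<lambda>y. y \<notin> set xs) \<pi>"

lemma move_all_to_front_Nil [simp]: "move_all_to_front [] \<pi> = \<pi>"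
  by (simp add: move_all_to_front_def)

lemma move_all_to_front_Cons:
  "x \<notin> set xs \<Longrightarrow> move_all_to_front (x # xs) \<pi> = x # removeAll x (move_all_to_front xs \<pi>)"
  unfolding move_all_to_front_def by (induction \<pi>) auto

lemma total_order_of_move_all_to_front:
  "total_order_of T \<pi> \<Longrightarrow> distinct xs \<Longrightarrow> set xs \<subseteq> T \<Longrightarrow>
     total_order_of T (move_all_to_front xs \<pi>)"
  unfolding total_order_of_def move_all_to_front_def by auto

lemma chain_length_le_num_phases_move_all_to_front:
  assumes "conflict_chain C T xs" "total_order_of T \<pi>"
  shows "length xs \<le> num_phases C T (move_all_to_front xs \<pi>)"
proof -
  let ?\<pi>' = "move_all_to_front xs \<pi>"
  have "total_order_of T ?\<pi>'"
    using assms total_order_of_move_all_to_front unfolding conflict_chain_def by blast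
  then obtain r where "respecting_rank C T ?\<pi>' (num_phases C T ?\<pi>') r"
    using rank_num_phases by blast
  then show ?thesis
    using length_le_rank_bound assms(1) precedes_append_consecutive
    unfolding conflict_chain_def move_all_to_front_def by blast
qed

lemma nat_intermediate_value_step:
  fixes g :: "nat \<Rightarrow> nat"
  assumes "\<forall>k<n. g k \<le> g (Suc k) + 1" "g n \<le> v" "v \<le> g 0"
  shows "\<exists>k\<le>n. g k = v"
  using assms
proof (induction n)
  case (Suc n)
  show ?case
  proof (cases "g n \<le> v")
    case True
    then show ?thesis
      using Suc by (metis le_SucI less_SucI)
  next
    case False
    moreover have "g n \<le> g (Suc n) + 1"
      using Suc.prems(1) by simp
    ultimately have "g (Suc n) = v"
      using Suc.prems(2) by linarith
    then show ?thesis
      by blast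
  qed
qed simp

lemma num_phases_interval:
  assumes \<sigma>: "total_order_of T \<sigma>" and chain: "conflict_chain C T xs"
    and sym: "\<forall>x\<in>T. \<forall>y\<in>T. C x y \<longrightarrow> C y x"
  shows "{num_phases C T \<sigma>..length xs} \<subseteq> num_phases C T ` {\<pi>. total_order_of T \<pi>}"
proof
  fix v
  assume v: "v \<in> {num_phases C T \<sigma>..length xs}"
  define g where "g k = num_phases C T (move_all_to_front (drop k xs) \<sigma>)" for k
  have xs: "distinct xs" "set xs \<subseteq> T"
    using chain unfolding conflict_chain_def by auto
  have total: "total_order_of T (move_all_to_front (drop k xs) \<sigma>)" for k
    using total_order_of_move_all_to_front[OF \<sigma>] xs set_drop_subset
    by (metis distinct_drop subset_trans)
  have "g k \<le> g (Suc k) + 1" if "k < length xs" for k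
  proof -
    have split: "drop k xs = xs ! k # drop (Suc k) xs"
      using that by (rule Cons_nth_drop_Suc[symmetric])
    then have "xs ! k \<notin> set (drop (Suc k) xs)"
      using distinct_drop[OF xs(1), of k] by simp
    then have "move_all_to_front (drop k xs) \<sigma> =
        xs ! k # removeAll (xs ! k) (move_all_to_front (drop (Suc k) xs) \<sigma>)"
      unfolding split by (rule move_all_to_front_Cons)
    moreover have "xs ! k \<in> T"
      using xs(2) that by (auto simp: nth_mem)
    ultimately show ?thesis
      unfolding g_def using num_phases_move_to_front[OF total _ sym] by simp
  qed
  moreover have "g (length xs) = num_phases C T \<sigma>"
    by (simp add: g_def)
  moreover have "length xs \<le> g 0"
    unfolding g_def using chain_length_le_num_phases_move_all_to_front[OF chain \<sigma>] by simp
  ultimately obtain k where "g k = v"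
    using nat_intermediate_value_step[of "length xs" g v] v by auto
  then show "v \<in> num_phases C T ` {\<pi>. total_order_of T \<pi>}"
    unfolding g_def using total by blast
qed

lemma finite_total_orders: "finite T \<Longrightarrow> finite {\<pi>. total_order_of T \<pi>}"
  unfolding total_order_of_def
  by (rule finite_subset[OF _ finite_subset_distinct]) auto

lemma min_phases_attained:
  assumes "finite T"
  shows "\<exists>\<sigma>. total_order_of T \<sigma> \<and> num_phases C T \<sigma> = min_phases C T"
proof -
  have "{num_phases C T \<pi> | \<pi>. total_order_of T \<pi>} = num_phases C T ` {\<pi>. total_order_of T \<pi>}"
    by blast
  moreover have "{\<pi>. total_order_of T \<pi>} \<noteq> {}"
    using finite_distinct_list[OF assms] unfolding total_order_of_def by auto
  ultimately have "min_phases C T \<in> num_phases C T ` {\<pi>. total_order_of T \<pi>}"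
    unfolding min_phases_def using finite_total_orders[OF assms]
    by (metis Min_in finite_imageI image_is_empty)
  then show ?thesis
    by auto
qed

lemma ch_attained:
  assumes "finite T"
  shows "\<exists>xs. conflict_chain C T xs \<and> length xs = ch C T"
proof -
  have "{length xs | xs. conflict_chain C T xs} \<subseteq> {..card T}"
    unfolding conflict_chain_def using assms
    by (auto dest: card_mono simp: distinct_card[symmetric])
  moreover have "conflict_chain C T []"
    unfolding conflict_chain_def by simp
  ultimately have "ch C T \<in> {length xs | xs. conflict_chain C T xs}"
    unfolding ch_def by (intro Max_in) (auto dest: finite_subset)
  then show ?thesis
    by auto
qed

lemma inj_divide_of_nat:
  assumes "n > 0"
  shows "inj (\<lambda>v :: nat. real n / real v)"
proof (rule injI)
  fix v w :: nat
  assume "real n / real v = real n / real w"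
  with assms show "v = w"
    by (cases "v = 0"; cases "w = 0") (auto simp: field_simps)
qed

lemma card_concurrency_levels:
  assumes "finite T" "T \<noteq> {}"
  shows "card {concurrency_level C T \<pi> | \<pi>. total_order_of T \<pi>} =
    card (num_phases C T ` {\<pi>. total_order_of T \<pi>})"
proof -
  have "{concurrency_level C T \<pi> | \<pi>. total_order_of T \<pi>} =
      (\<lambda>v. real (card T) / real v) ` num_phases C T ` {\<pi>. total_order_of T \<pi>}"
    unfolding concurrency_level_def by blast
  moreover have "inj (\<lambda>v :: nat. real (card T) / real v)"
    using assms by (simp add: card_gt_0_iff inj_divide_of_nat)
  ultimately show ?thesis
    by (metis card_image inj_on_subset subset_UNIV)
qed

text \<open>For b = 1 the left-hand side is the junk value \<lceil>x / 0\<rceil> = 0.\<close>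

lemma ceiling_le_nat_diff:
  fixes a b :: nat
  shows "\<lceil>(real a - (real b - 1)) / (real b - 1)\<rceil> \<le> int (a + 1 - b)"
proof (cases "2 \<le> b \<and> b \<le> a + 1")
  case True
  then have "(real a - (real b - 1)) / (real b - 1) \<le> real a - (real b - 1)"
    by (simp add: divide_le_eq mult_le_cancel_left1)
  also have "\<dots> = real (a + 1 - b)"
    using True by (simp add: of_nat_diff)
  finally show ?thesis
    by (simp add: ceiling_le_iff)
next
  case False
  then have "(real a - (real b - 1)) / (real b - 1) \<le> 0"
    by (auto intro: divide_nonneg_nonpos divide_nonpos_nonneg)
  then show ?thesis
    by (simp add: ceiling_le_iff)
qed

theorem theorem6:
  fixes T :: "'a set" and C :: "'a \<Rightarrow> 'a \<Rightarrow> bool"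
  assumes "finite T"
    and "\<forall>x\<in>T. \<forall>y\<in>T. C x y \<longrightarrow> C y x"
    and "\<forall>x\<in>T. \<not> C x x"
    and "\<exists>x\<in>T. \<exists>y\<in>T. C x y"
  shows "int (card {concurrency_level C T \<pi> | \<pi>. total_order_of T \<pi>}) \<ge>
           \<lceil>(real (ch C T) - (real (min_phases C T) - 1)) / (real (min_phases C T) - 1)\<rceil>"
proof -
  obtain \<sigma> where \<sigma>: "total_order_of T \<sigma>" "num_phases C T \<sigma> = min_phases C T"
    using min_phases_attained[OF assms(1)] by blast
  obtain xs where xs: "conflict_chain C T xs" "length xs = ch C T"
    using ch_attained[OF assms(1)] by blast
  have "{min_phases C T..ch C T} \<subseteq> num_phases C T ` {\<pi>. total_order_of T \<pi>}"
    using num_phases_interval[OF \<sigma>(1) xs(1) assms(2)] \<sigma>(2) xs(2) by simp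
  then have "card {min_phases C T..ch C T} \<le> card (num_phases C T ` {\<pi>. total_order_of T \<pi>})"
    by (rule card_mono[OF finite_imageI[OF finite_total_orders[OF assms(1)]]])
  also have "\<dots> = card {concurrency_level C T \<pi> | \<pi>. total_order_of T \<pi>}"
    using assms(4) by (intro card_concurrency_levels[OF assms(1), symmetric]) blast
  finally have "ch C T + 1 - min_phases C T \<le> card {concurrency_level C T \<pi> | \<pi>. total_order_of T \<pi>}"
    by simp
  then show ?thesis
    using ceiling_le_nat_diff[of "ch C T" "min_phases C T"] by linarith
qed

end
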